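(* Let $A$ be the weighted shift on $\mathcal{H}$ with weights $\{1/n\}_{n\ge1}$. Then for every $r\ge0$, \[\lim_{z\to0}\frac{\ln\|(z-rA)^{-1}\|}{\ln\|(z-A)^{-1}\|}=r.\]
   Context: $\mathcal{H}$ is a separable infinite-dimensional complex Hilbert space with orthonormal basis $\{e_n\}_{n=0}^\infty$, and $A$ is defined by $Ae_n=\frac{1}{n+1}e_{n+1}$ for $n\ge0$. $A$ is quasinilpotent, and $z$ ranges over nonzero complex numbers. *)

theory Defs
  imports "HOL-Analysis.Analysis"
begin

text \<open>Concrete model of the separable infinite-dimensional Hilbert space:
  l2(N) = square-summable complex sequences, with e_n the n-th unit sequence.\<close>

definition l2 :: "(nat \<Rightarrow> complex) set" where
  "l2 = {x. summable (\<lambda>n. (cmod (x n))\<^sup>2)}"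

definition l2norm :: "(nat \<Rightarrow> complex) \<Rightarrow> real" where
  "l2norm x = sqrt (\<Sum>n. (cmod (x n))\<^sup>2)"

text \<open>Weighted shift A e_n = e_(n+1) / (n+1), i.e. (A x)_0 = 0, (A x)_m = x_(m-1) / m.\<close>

definition shiftA :: "(nat \<Rightarrow> complex) \<Rightarrow> (nat \<Rightarrow> complex)" where
  "shiftA x = (\<lambda>m. if m = 0 then 0 else x (m - 1) / of_nat m)"

definition opnorm :: "((nat \<Rightarrow> complex) \<Rightarrow> (nat \<Rightarrow> complex)) \<Rightarrow> real" where
  "opnorm T = Sup {l2norm (T x) | x. x \<in> l2 \<and> l2norm x \<le> 1}"

definition zminusrA :: "complex \<Rightarrow> real \<Rightarrow> (nat \<Rightarrow> complex) \<Rightarrow> (nat \<Rightarrow> complex)" where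
  "zminusrA z r x = (\<lambda>n. z * x n - of_real r * shiftA x n)"

definition resolvent :: "complex \<Rightarrow> real \<Rightarrow> (nat \<Rightarrow> complex) \<Rightarrow> (nat \<Rightarrow> complex)" where
  "resolvent z r = inv_into l2 (zminusrA z r)"

end

theory Submission
  imports Defs "HOL-Real_Asymp.Real_Asymp"
begin

text \<open>Solving (z - rA) x = y by forward substitution exhibits x as the convolution of y
  with a kernel bounded by (r/|z|)^k / (k! |z|), so Young's inequality gives
  ||(z - rA)^-1|| <= e^(r/|z|) / |z|.  Conversely (z - rA)^-1 e_0 has coordinates
  r^k / (k! z^(k+1)), and for 0 < q < 1 some term t^k / k! of the exponential series is
  at least (1 - q) e^(q t): otherwise weighting the terms by q^k would give e^(q t) < e^(q t).
  Taking q = 1 - sqrt |z|, both bounds yield |z| ln ||(z - rA)^-1|| --> r as z --> 0,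
  and the theorem is the quotient of these limits for r and for 1.\<close>

lemma l2norm_nonneg: "x \<in> l2 \<Longrightarrow> 0 \<le> l2norm x"
  unfolding l2_def l2norm_def by (simp add: suminf_nonneg)

lemma norm_le_l2norm:
  assumes "x \<in> l2"
  shows "cmod (x k) \<le> l2norm x"
proof -
  have "cmod (x k) = sqrt (\<Sum>n\<in>{k}. (cmod (x n))\<^sup>2)" by simp
  also have "\<dots> \<le> l2norm x"
    unfolding l2norm_def using assms by (intro real_sqrt_le_mono sum_le_suminf) (auto simp: l2_def)
  finally show ?thesis .
qed

lemma opnorm_le:
  assumes "M \<ge> 0" and bound: "\<And>x. x \<in> l2 \<Longrightarrow> l2norm (T x) \<le> M * l2norm x"
  shows "opnorm T \<le> M"
  unfolding opnorm_def
proof (rule cSup_least)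
  have "(\<lambda>_. 0) \<in> l2" "l2norm (\<lambda>_::nat. 0::complex) \<le> 1"
    by (simp_all add: l2_def l2norm_def)
  then show "{l2norm (T x) |x. x \<in> l2 \<and> l2norm x \<le> 1} \<noteq> {}" by blast
next
  fix s assume "s \<in> {l2norm (T x) |x. x \<in> l2 \<and> l2norm x \<le> 1}"
  then obtain x where "s = l2norm (T x)" "x \<in> l2" "l2norm x \<le> 1" by blast
  with bound[of x] \<open>M \<ge> 0\<close> show "s \<le> M"
    by (metis mult_left_le order_trans)
qed

lemma l2norm_le_opnorm:
  assumes bound: "\<And>x. x \<in> l2 \<Longrightarrow> l2norm (T x) \<le> M * l2norm x"
    and "x \<in> l2" "l2norm x \<le> 1"
  shows "l2norm (T x) \<le> opnorm T"
  unfolding opnorm_def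
proof (rule cSup_upper)
  show "l2norm (T x) \<in> {l2norm (T x) |x. x \<in> l2 \<and> l2norm x \<le> 1}"
    using assms(2,3) by blast
  have "l2norm (T v) \<le> \<bar>M\<bar>" if "v \<in> l2" "l2norm v \<le> 1" for v
  proof -
    have "M * l2norm v \<le> \<bar>M\<bar> * l2norm v"
      using l2norm_nonneg[OF \<open>v \<in> l2\<close>] by (intro mult_right_mono) auto
    also have "\<dots> \<le> \<bar>M\<bar>"
      using \<open>l2norm v \<le> 1\<close> by (simp add: mult_left_le)
    finally show ?thesis using bound[OF \<open>v \<in> l2\<close>] by linarith
  qed
  then show "bdd_above {l2norm (T x) |x. x \<in> l2 \<and> l2norm x \<le> 1}"
    unfolding bdd_above_def by blast
qed

lemma Cauchy_Schwarz_weighted_sum: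
  fixes c b :: "'a \<Rightarrow> real"
  assumes "\<And>k. c k \<ge> 0"
  shows "(\<Sum>k\<in>I. c k * b k)\<^sup>2 \<le> (\<Sum>k\<in>I. c k) * (\<Sum>k\<in>I. c k * (b k)\<^sup>2)"
proof -
  have "(\<Sum>k\<in>I. c k * b k)\<^sup>2 = (\<Sum>k\<in>I. sqrt (c k) * (sqrt (c k) * b k))\<^sup>2"
    using assms by (simp add: mult.assoc[symmetric])
  also have "\<dots> \<le> (\<Sum>k\<in>I. (sqrt (c k))\<^sup>2) * (\<Sum>k\<in>I. (sqrt (c k) * b k)\<^sup>2)"
    by (rule Cauchy_Schwarz_ineq_sum)
  also have "\<dots> = (\<Sum>k\<in>I. c k) * (\<Sum>k\<in>I. c k * (b k)\<^sup>2)"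
    using assms by (simp add: power_mult_distrib)
  finally show ?thesis .
qed

lemma convolution_dominated_square_summable:
  fixes a b c :: "nat \<Rightarrow> real"
  assumes c_nonneg: "\<And>k. c k \<ge> 0" and a_nonneg: "\<And>n. a n \<ge> 0"
    and "summable c" and b_l2: "summable (\<lambda>k. (b k)\<^sup>2)"
    and a_le: "\<And>n. a n \<le> (\<Sum>k\<le>n. c k * b (n - k))"
  shows "summable (\<lambda>n. (a n)\<^sup>2)"
    and "(\<Sum>n. (a n)\<^sup>2) \<le> (suminf c)\<^sup>2 * (\<Sum>k. (b k)\<^sup>2)"
proof -
  define C where "C = suminf c"
  define P where "P = (\<lambda>n. \<Sum>k\<le>n. c k * (b (n - k))\<^sup>2)"
  have a_square_le: "(a n)\<^sup>2 \<le> C * P n" for n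
  proof -
    have "(a n)\<^sup>2 \<le> (\<Sum>k\<le>n. c k * b (n - k))\<^sup>2"
      using a_nonneg a_le by (intro power_mono) auto
    also have "\<dots> \<le> (\<Sum>k\<le>n. c k) * P n"
      unfolding P_def using c_nonneg by (rule Cauchy_Schwarz_weighted_sum)
    also have "\<dots> \<le> C * P n"
      unfolding C_def P_def using \<open>summable c\<close> c_nonneg
      by (intro mult_right_mono sum_le_suminf sum_nonneg mult_nonneg_nonneg) auto
    finally show ?thesis .
  qed
  have abs_c: "summable (\<lambda>k. norm (c k))" and abs_b: "summable (\<lambda>k. norm ((b k)\<^sup>2))"
    using \<open>summable c\<close> c_nonneg b_l2 by simp_all
  have "summable P" and P_sum: "suminf P = C * (\<Sum>k. (b k)\<^sup>2)"
    using summable_Cauchy_product[OF abs_c abs_b] Cauchy_product[OF abs_c abs_b]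
    by (simp_all add: P_def C_def)
  have CP: "summable (\<lambda>n. C * P n)" using \<open>summable P\<close> by (rule summable_mult)
  show a_l2: "summable (\<lambda>n. (a n)\<^sup>2)"
    by (rule summable_comparison_test[OF _ CP]) (use a_square_le in auto)
  have "(\<Sum>n. (a n)\<^sup>2) \<le> (\<Sum>n. C * P n)"
    by (rule suminf_le[OF a_square_le a_l2 CP])
  also have "\<dots> = C * (C * (\<Sum>k. (b k)\<^sup>2))"
    using suminf_mult[OF \<open>summable P\<close>, of C] P_sum by simp
  finally show "(\<Sum>n. (a n)\<^sup>2) \<le> (suminf c)\<^sup>2 * (\<Sum>k. (b k)\<^sup>2)"
    by (simp add: C_def power2_eq_square)
qed

lemma exp_series_sums: "(\<lambda>k. t ^ k / fact k) sums exp (t::real)"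
  using exp_converges[of t] by (simp add: divide_inverse_commute)

lemma exists_exp_series_term_ge:
  fixes t q :: real
  assumes "t \<ge> 0" "0 < q" "q < 1"
  shows "\<exists>k. (1 - q) * exp (q * t) \<le> t ^ k / fact k"
proof (rule ccontr)
  assume "\<not> ?thesis"
  then have term_less: "t ^ k / fact k < (1 - q) * exp (q * t)" for k
    by (simp add: not_le)
  define f where "f = (\<lambda>k. q ^ k * (t ^ k / fact k))"
  define g where "g = (\<lambda>k. q ^ k * ((1 - q) * exp (q * t)))"
  have "f sums exp (q * t)"
    using exp_series_sums[of "q * t"] by (simp add: f_def power_mult_distrib)
  moreover have "g sums exp (q * t)"
    using sums_mult2[OF geometric_sums[of q], of "(1 - q) * exp (q * t)"] assms
    by (simp add: g_def)
  ultimately have diff_sums: "(\<lambda>k. g k - f k) sums 0"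
    using sums_diff by fastforce
  have "0 < (\<Sum>k. g k - f k)"
  proof (rule suminf_pos2[where i = 0])
    show "summable (\<lambda>k. g k - f k)" using diff_sums by (simp add: sums_iff)
    show "0 \<le> g k - f k" for k
    proof -
      have "q ^ k * (t ^ k / fact k) \<le> q ^ k * ((1 - q) * exp (q * t))"
        using term_less[of k] assms by (intro mult_left_mono) auto
      then show ?thesis by (simp add: f_def g_def)
    qed
    show "0 < g 0 - f 0" using term_less[of 0] by (simp add: f_def g_def)
  qed
  then show False using diff_sums by (simp add: sums_iff)
qed

fun resolvent_seq :: "complex \<Rightarrow> real \<Rightarrow> (nat \<Rightarrow> complex) \<Rightarrow> nat \<Rightarrow> complex" where
  "resolvent_seq z r y 0 = y 0 / z"
| "resolvent_seq z r y (Suc n) = (y (Suc n) + of_real r * resolvent_seq z r y n / of_nat (Suc n)) / z"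

lemma zminusrA_resolvent_seq:
  assumes "z \<noteq> 0"
  shows "zminusrA z r (resolvent_seq z r y) = y"
proof
  fix n show "zminusrA z r (resolvent_seq z r y) n = y n"
    using assms by (cases n) (auto simp: zminusrA_def shiftA_def field_simps)
qed

lemma resolvent_seq_unique:
  assumes "z \<noteq> 0" and eq: "zminusrA z r x = y"
  shows "x = resolvent_seq z r y"
proof
  fix n show "x n = resolvent_seq z r y n"
  proof (induction n)
    case 0
    show ?case using fun_cong[OF eq, of 0] assms(1)
      by (simp add: zminusrA_def shiftA_def field_simps)
  next
    case (Suc n)
    have "z * x (Suc n) - of_real r * (x n / of_nat (Suc n)) = y (Suc n)"
      using fun_cong[OF eq, of "Suc n"] by (simp add: zminusrA_def shiftA_def)
    then show ?case using Suc assms(1) by (simp add: field_simps)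
  qed
qed

lemma resolvent_eq_resolvent_seq:
  assumes "z \<noteq> 0" "resolvent_seq z r y \<in> l2"
  shows "resolvent z r y = resolvent_seq z r y"
proof -
  have "inj_on (zminusrA z r) l2"
    by (rule inj_onI) (metis resolvent_seq_unique assms(1))
  then show ?thesis
    unfolding resolvent_def using inv_into_f_f assms zminusrA_resolvent_seq by metis
qed

lemma norm_resolvent_seq_le:
  assumes "z \<noteq> 0" "r \<ge> 0"
  shows "cmod (resolvent_seq z r y n)
    \<le> (\<Sum>k\<le>n. (r / cmod z) ^ k / fact k / cmod z * cmod (y (n - k)))"
proof (induction n)
  case 0
  then show ?case by (simp add: norm_divide)
next
  case (Suc n)
  define u where "u = cmod z"
  define c where "c = (\<lambda>k. (r / u) ^ k / fact k / u)"
  have "u > 0" using assms u_def by simp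
  have IH: "cmod (resolvent_seq z r y n) \<le> (\<Sum>k\<le>n. c k * cmod (y (n - k)))"
    using Suc c_def u_def by simp
  have c_step: "r / Suc n / u * c k \<le> c (Suc k)" if "k \<le> n" for k
  proof -
    have "r / Suc n / u * c k \<le> r / Suc k / u * c k"
      using that assms(2) \<open>u > 0\<close>
      by (intro mult_right_mono divide_right_mono) (auto simp: c_def frac_le)
    also have "\<dots> = c (Suc k)" by (simp add: c_def field_simps)
    finally show ?thesis .
  qed
  have "cmod (resolvent_seq z r y (Suc n))
      \<le> (cmod (y (Suc n)) + r / Suc n * cmod (resolvent_seq z r y n)) / u"
    using norm_triangle_ineq[of "y (Suc n)" "of_real r * resolvent_seq z r y n / of_nat (Suc n)"]
      assms(2)
    by (simp add: u_def norm_divide norm_mult divide_right_mono del: of_nat_Suc)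
  also have "\<dots> \<le> (cmod (y (Suc n)) + r / Suc n * (\<Sum>k\<le>n. c k * cmod (y (n - k)))) / u"
    using IH \<open>u > 0\<close> assms(2) by (intro divide_right_mono add_left_mono mult_left_mono) auto
  also have "\<dots> = c 0 * cmod (y (Suc n)) + (\<Sum>k\<le>n. (r / Suc n / u * c k) * cmod (y (n - k)))"
    by (simp add: c_def sum_distrib_left sum_divide_distrib add_divide_distrib mult_ac)
  also have "\<dots> \<le> c 0 * cmod (y (Suc n)) + (\<Sum>k\<le>n. c (Suc k) * cmod (y (n - k)))"
    using c_step by (intro add_left_mono sum_mono mult_right_mono) auto
  also have "\<dots> = (\<Sum>k\<le>Suc n. c k * cmod (y (Suc n - k)))"
    by (subst sum.atMost_Suc_shift) simp
  finally show ?case by (simp add: c_def u_def)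
qed

lemma resolvent_seq_l2:
  assumes "z \<noteq> 0" "r \<ge> 0" "y \<in> l2"
  shows "resolvent_seq z r y \<in> l2"
    and "l2norm (resolvent_seq z r y) \<le> exp (r / cmod z) / cmod z * l2norm y"
proof -
  define u where "u = cmod z"
  define c where "c = (\<lambda>k. (r / u) ^ k / fact k / u)"
  have "u > 0" using assms u_def by simp
  have c_sums: "c sums (exp (r / u) / u)"
    unfolding c_def by (rule sums_divide[OF exp_series_sums])
  have y_l2: "summable (\<lambda>k. (cmod (y k))\<^sup>2)" using assms(3) by (simp add: l2_def)
  have c_nonneg: "c k \<ge> 0" for k using \<open>u > 0\<close> assms(2) by (simp add: c_def)
  have "summable c" using c_sums by (simp add: sums_iff)
  have dominated: "cmod (resolvent_seq z r y n) \<le> (\<Sum>k\<le>n. c k * cmod (y (n - k)))" for n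
    using norm_resolvent_seq_le[OF assms(1,2)] by (simp add: c_def u_def)
  note young = convolution_dominated_square_summable
    [OF c_nonneg norm_ge_zero \<open>summable c\<close> y_l2 dominated]
  show "resolvent_seq z r y \<in> l2" using young(1) by (simp add: l2_def)
  have "l2norm (resolvent_seq z r y) \<le> sqrt ((suminf c)\<^sup>2 * (\<Sum>k. (cmod (y k))\<^sup>2))"
    unfolding l2norm_def by (rule real_sqrt_le_mono[OF young(2)])
  also have "\<dots> = exp (r / u) / u * l2norm y"
    using c_sums \<open>u > 0\<close> by (simp add: l2norm_def real_sqrt_mult sums_iff)
  finally show "l2norm (resolvent_seq z r y) \<le> exp (r / cmod z) / cmod z * l2norm y"
    by (simp add: u_def)
qed

lemma l2norm_resolvent_le:
  assumes "z \<noteq> 0" "r \<ge> 0" "y \<in> l2"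
  shows "l2norm (resolvent z r y) \<le> exp (r / cmod z) / cmod z * l2norm y"
  using resolvent_seq_l2[OF assms] resolvent_eq_resolvent_seq[OF assms(1)] by simp

lemma opnorm_resolvent_le:
  assumes "z \<noteq> 0" "r \<ge> 0"
  shows "opnorm (resolvent z r) \<le> exp (r / cmod z) / cmod z"
  using assms by (intro opnorm_le l2norm_resolvent_le) auto

definition e0 :: "nat \<Rightarrow> complex" where
  "e0 = (\<lambda>n. if n = 0 then 1 else 0)"

lemma e0_l2: "e0 \<in> l2" and l2norm_e0: "l2norm e0 = 1"
proof -
  have "(\<lambda>n. (cmod (e0 n))\<^sup>2) = (\<lambda>n. if n = 0 then 1 else 0)"
    by (auto simp: e0_def)
  then have "(\<lambda>n. (cmod (e0 n))\<^sup>2) sums 1"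
    using sums_single[of 0 "\<lambda>_. 1::real"] by simp
  then show "e0 \<in> l2" "l2norm e0 = 1" by (auto simp: l2_def l2norm_def sums_iff)
qed

lemma resolvent_seq_e0:
  assumes "z \<noteq> 0"
  shows "resolvent_seq z r e0 k = of_real r ^ k / (fact k * z ^ (k + 1))"
proof (induction k)
  case 0
  then show ?case by (simp add: e0_def)
next
  case (Suc k)
  then show ?case using assms by (simp add: e0_def field_simps del: of_nat_Suc)
qed

lemma exp_series_term_le_opnorm_resolvent:
  assumes "z \<noteq> 0" "r \<ge> 0"
  shows "(r / cmod z) ^ k / fact k / cmod z \<le> opnorm (resolvent z r)"
proof -
  have "(r / cmod z) ^ k / fact k / cmod z = cmod (resolvent_seq z r e0 k)"
    using assms by (simp add: resolvent_seq_e0 norm_divide norm_mult norm_power power_divide)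
  also have "\<dots> \<le> l2norm (resolvent z r e0)"
    using resolvent_seq_l2(1)[OF assms e0_l2] resolvent_eq_resolvent_seq[OF assms(1)]
    by (simp add: norm_le_l2norm)
  also have "\<dots> \<le> opnorm (resolvent z r)"
    using l2norm_resolvent_le[OF assms] e0_l2 l2norm_e0
    by (intro l2norm_le_opnorm[where M = "exp (r / cmod z) / cmod z"]) auto
  finally show ?thesis .
qed

lemma opnorm_resolvent_ge:
  assumes "z \<noteq> 0" "r \<ge> 0" "0 < q" "q < 1"
  shows "(1 - q) * exp (q * (r / cmod z)) / cmod z \<le> opnorm (resolvent z r)"
proof -
  obtain k where "(1 - q) * exp (q * (r / cmod z)) \<le> (r / cmod z) ^ k / fact k"
    using exists_exp_series_term_ge[OF _ assms(3,4), of "r / cmod z"] assms(2) by auto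
  then have "(1 - q) * exp (q * (r / cmod z)) / cmod z \<le> (r / cmod z) ^ k / fact k / cmod z"
    by (rule divide_right_mono) simp
  also have "\<dots> \<le> opnorm (resolvent z r)"
    by (rule exp_series_term_le_opnorm_resolvent[OF assms(1,2)])
  finally show ?thesis .
qed

lemma norm_mult_ln_opnorm_resolvent_bounds:
  assumes "z \<noteq> 0" "cmod z < 1" "r \<ge> 0"
  shows "(1 - sqrt (cmod z)) * r - cmod z / 2 * ln (cmod z)
      \<le> cmod z * ln (opnorm (resolvent z r))"
    and "cmod z * ln (opnorm (resolvent z r)) \<le> r - cmod z * ln (cmod z)"
proof -
  define u where "u = cmod z"
  have u: "0 < u" "u < 1" using assms u_def by auto
  define L where "L = sqrt u * exp ((1 - sqrt u) * (r / u)) / u"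
  have "L > 0" using u by (simp add: L_def)
  have "L \<le> opnorm (resolvent z r)"
    using opnorm_resolvent_ge[OF assms(1,3), of "1 - sqrt u"] u
    by (simp add: L_def u_def real_sqrt_lt_1_iff)
  then have "u * ln L \<le> u * ln (opnorm (resolvent z r))"
    using \<open>L > 0\<close> u by (intro mult_left_mono) auto
  moreover have "u * ln L = (1 - sqrt u) * r - u / 2 * ln u"
    using u by (simp add: L_def ln_div ln_mult ln_sqrt field_simps)
  ultimately show "(1 - sqrt (cmod z)) * r - cmod z / 2 * ln (cmod z)
      \<le> cmod z * ln (opnorm (resolvent z r))"
    by (simp add: u_def)
  have "u * ln (opnorm (resolvent z r)) \<le> u * ln (exp (r / u) / u)"
    using opnorm_resolvent_le[OF assms(1,3)] \<open>L > 0\<close> \<open>L \<le> opnorm (resolvent z r)\<close> u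
    by (intro mult_left_mono) (auto simp: u_def)
  also have "\<dots> = r - u * ln u"
    using u by (simp add: ln_div field_simps)
  finally show "cmod z * ln (opnorm (resolvent z r)) \<le> r - cmod z * ln (cmod z)"
    by (simp add: u_def)
qed

lemma filterlim_norm_at_0: "filterlim norm (at_right 0) (at (0::'a::real_normed_vector))"
  by (auto simp: filterlim_at eventually_at_filter intro!: tendsto_norm_zero tendsto_ident_at)

lemma tendsto_norm_mult_ln_opnorm_resolvent:
  assumes "r \<ge> 0"
  shows "((\<lambda>z. cmod z * ln (opnorm (resolvent z r))) \<longlongrightarrow> r) (at 0)"
proof (rule tendsto_sandwich)
  have "((\<lambda>u::real. (1 - sqrt u) * r - u / 2 * ln u) \<longlongrightarrow> r) (at_right 0)"
    by real_asymp
  then show "((\<lambda>z. (1 - sqrt (cmod z)) * r - cmod z / 2 * ln (cmod z)) \<longlongrightarrow> r) (at 0)"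
    by (rule filterlim_compose[OF _ filterlim_norm_at_0])
  have "((\<lambda>u::real. r - u * ln u) \<longlongrightarrow> r) (at_right 0)"
    by real_asymp
  then show "((\<lambda>z. r - cmod z * ln (cmod z)) \<longlongrightarrow> r) (at 0)"
    by (rule filterlim_compose[OF _ filterlim_norm_at_0])
  have near_0: "\<forall>\<^sub>F z in at (0::complex). z \<noteq> 0 \<and> cmod z < 1"
    unfolding eventually_at by (intro exI[of _ 1]) (auto simp: dist_norm)
  show "\<forall>\<^sub>F z in at 0. (1 - sqrt (cmod z)) * r - cmod z / 2 * ln (cmod z)
      \<le> cmod z * ln (opnorm (resolvent z r))"
    using near_0 by eventually_elim (use norm_mult_ln_opnorm_resolvent_bounds(1) assms in auto)
  show "\<forall>\<^sub>F z in at 0. cmod z * ln (opnorm (resolvent z r)) \<le> r - cmod z * ln (cmod z)"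
    using near_0 by eventually_elim (use norm_mult_ln_opnorm_resolvent_bounds(2) assms in auto)
qed

theorem lemma3p5:
  fixes r :: real
  assumes "r \<ge> 0"
  shows "((\<lambda>z. ln (opnorm (resolvent z r)) / ln (opnorm (resolvent z 1))) \<longlongrightarrow> r) (at (0::complex))"
proof -
  have "((\<lambda>z. (cmod z * ln (opnorm (resolvent z r))) / (cmod z * ln (opnorm (resolvent z 1))))
      \<longlongrightarrow> r / 1) (at 0)"
    by (intro tendsto_divide tendsto_norm_mult_ln_opnorm_resolvent assms) auto
  moreover have "\<forall>\<^sub>F z in at (0::complex).
      (cmod z * ln (opnorm (resolvent z r))) / (cmod z * ln (opnorm (resolvent z 1)))
      = ln (opnorm (resolvent z r)) / ln (opnorm (resolvent z 1))"
    unfolding eventually_at_filter by (intro always_eventually) auto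
  ultimately show ?thesis by (simp add: tendsto_cong)
qed

end
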